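(* Let $\Theta=\Theta_1\times\cdots\times\Theta_{N}\subseteq\mathbb{R}^{N}$, let $\theta$ be a random vector on $\Theta$ with independent components, $\theta_j$ having density $\pi_j$, with law $\mu(d\theta)=\prod_j\pi_j(\theta_j)\,d\theta_j$. Let $\mathscr{X}\subset\mathbb{R}^d$ ($d\in\{1,2,3\}$) be compact and $f:\mathscr{X}\times\Theta\to\mathbb{R}$ with $f\in L^2(\mathscr{X}\times\Theta)$, and assume $D(f;s)>0$ for almost every $s\in\mathscr{X}$. Let $U\subseteq\{1,\dots,N\}$, $U^c=\{1,\dots,N\}\setminus U$. For $\eta\in\Theta_{U^c}$ define the reduced model $f^{(\eta)}(s,\theta_U)=f(s,\theta_U,\eta)$ (i.e. $f(s,\theta)$ with the entries $\theta_{U^c}$ fixed at $\eta$), and the relative mean square error $$\mathcal{E}(f;\eta)=\frac{\int_{\mathscr{X}}\int_\Theta\big(f(s,\theta)-f^{(\eta)}(s,\theta_U)\big)^2\mu(d\theta)\,ds}{\int_{\mathscr{X}}\int_\Theta f(s,\theta)^2\,\mu(d\theta)\,ds}.$$ Then $\int_{\Theta_{U^c}}\mathcal{E}(f;\eta)\,\mu(d\eta)\le 2\,\mathfrak{S}^{\mathrm{tot}}_{U^c}(f;\mathscr{X})$.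
   Context: For $V\subseteq\{1,\dots,N\}$, $\Theta_V=\prod_{j\in V}\Theta_j$ carries the measure $\mu(d\theta_V)=\prod_{j\in V}\pi_j(\theta_j)d\theta_j$, and $\theta_V=(\theta_j)_{j\in V}$. For fixed $s$: $f_0(s)=\mathrm{E}[f(s,\cdot)]$, $f_1(s,\theta_U)=\mathrm{E}[f(s,\cdot)\mid\theta_U]-f_0(s)$, $f_2(s,\theta_{U^c})=\mathrm{E}[f(s,\cdot)\mid\theta_{U^c}]-f_0(s)$; $D(f;s)=\mathrm{Var}[f(s,\cdot)]$, $D_U(f;s)=\mathrm{E}[f_1^2]$, $D_{U^c}(f;s)=\mathrm{E}[f_2^2]$, $D_{U,U^c}(f;s)=D(f;s)-D_U(f;s)-D_{U^c}(f;s)$. For any index set $V$ with complement $V^c$, $D^{\mathrm{tot}}_V(f;s)=D(f;s)-D_{V^c}(f;s)$ (so $D^{\mathrm{tot}}_{U^c}=D_{U^c}+D_{U,U^c}$), and the functional total Sobol' index is $\mathfrak{S}^{\mathrm{tot}}_V(f;\mathscr{X})=\int_{\mathscr{X}}D^{\mathrm{tot}}_V(f;s)\,ds\big/\int_{\mathscr{X}}D(f;s)\,ds$. *)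

theory Defs
  imports "HOL-Probability.Probability"
begin

text \<open>Parameter vectors are functions nat => real, extensional on the index set
  (points of PiM I M). The law of theta_j is M j; the law of theta is PiM I M.\<close>

definition theta_measure :: "real set \<Rightarrow> (real \<Rightarrow> real) \<Rightarrow> real measure" where
  "theta_measure Th p = density lborel (\<lambda>x. ennreal (indicator Th x * p x))"

definition merge_pt :: "nat set \<Rightarrow> (nat \<Rightarrow> real) \<Rightarrow> (nat \<Rightarrow> real) \<Rightarrow> (nat \<Rightarrow> real)" where
  "merge_pt V th eta = (\<lambda>j. if j \<in> V then th j else eta j)"

definition sob_f0 :: "(nat \<Rightarrow> real measure) \<Rightarrow> nat set \<Rightarrow> ('a \<Rightarrow> (nat \<Rightarrow> real) \<Rightarrow> real) \<Rightarrow> 'a \<Rightarrow> real" where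
  "sob_f0 M I f s = (\<integral>th. f s th \<partial>PiM I M)"

definition sob_D :: "(nat \<Rightarrow> real measure) \<Rightarrow> nat set \<Rightarrow> ('a \<Rightarrow> (nat \<Rightarrow> real) \<Rightarrow> real) \<Rightarrow> 'a \<Rightarrow> real" where
  "sob_D M I f s = (\<integral>th. (f s th - sob_f0 M I f s)\<^sup>2 \<partial>PiM I M)"

text \<open>E[f(s,.) | theta_V = xi] (independent components): integrate out theta_{I-V}.\<close>
definition sob_condE :: "(nat \<Rightarrow> real measure) \<Rightarrow> nat set \<Rightarrow> nat set \<Rightarrow> ('a \<Rightarrow> (nat \<Rightarrow> real) \<Rightarrow> real)
    \<Rightarrow> 'a \<Rightarrow> (nat \<Rightarrow> real) \<Rightarrow> real" where
  "sob_condE M I V f s xi = (\<integral>zeta. f s (merge_pt V xi zeta) \<partial>PiM (I - V) M)"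

definition sob_DV :: "(nat \<Rightarrow> real measure) \<Rightarrow> nat set \<Rightarrow> nat set \<Rightarrow> ('a \<Rightarrow> (nat \<Rightarrow> real) \<Rightarrow> real) \<Rightarrow> 'a \<Rightarrow> real" where
  "sob_DV M I V f s = (\<integral>xi. (sob_condE M I V f s xi - sob_f0 M I f s)\<^sup>2 \<partial>PiM V M)"

definition sob_Dtot :: "(nat \<Rightarrow> real measure) \<Rightarrow> nat set \<Rightarrow> nat set \<Rightarrow> ('a \<Rightarrow> (nat \<Rightarrow> real) \<Rightarrow> real) \<Rightarrow> 'a \<Rightarrow> real" where
  "sob_Dtot M I V f s = sob_D M I f s - sob_DV M I (I - V) f s"

definition sobol_tot :: "(nat \<Rightarrow> real measure) \<Rightarrow> nat set \<Rightarrow> nat set \<Rightarrow> ('a::euclidean_space \<Rightarrow> (nat \<Rightarrow> real) \<Rightarrow> real)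
    \<Rightarrow> 'a set \<Rightarrow> real" where
  "sobol_tot M I V f X = (LINT s:X|lborel. sob_Dtot M I V f s) / (LINT s:X|lborel. sob_D M I f s)"

definition reduced_model :: "nat set \<Rightarrow> ('a \<Rightarrow> (nat \<Rightarrow> real) \<Rightarrow> real) \<Rightarrow> (nat \<Rightarrow> real) \<Rightarrow> 'a \<Rightarrow> (nat \<Rightarrow> real) \<Rightarrow> real" where
  "reduced_model U f eta s th = f s (merge_pt U th eta)"

definition rel_mse :: "(nat \<Rightarrow> real measure) \<Rightarrow> nat set \<Rightarrow> nat set \<Rightarrow> ('a::euclidean_space \<Rightarrow> (nat \<Rightarrow> real) \<Rightarrow> real)
    \<Rightarrow> 'a set \<Rightarrow> (nat \<Rightarrow> real) \<Rightarrow> real" where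
  "rel_mse M I U f X eta =
     (LINT s:X|lborel. (\<integral>th. (f s th - reduced_model U f eta s th)\<^sup>2 \<partial>PiM I M))
     / (LINT s:X|lborel. (\<integral>th. (f s th)\<^sup>2 \<partial>PiM I M))"

end

theory Submission
  imports Defs
begin

text \<open>For fixed s write \<theta> = (x, y) with x = \<theta>_U and y = \<theta>_{U^c}. The reduced model evaluates f
  at (x, \<eta>), so averaging its squared error over \<theta> and \<eta> gives, for each x, the mean squared
  difference of two independent copies of f(x, -), i.e. twice the variance of y \<mapsto> f(x, y).
  Averaging over x yields 2 (E f^2 - E (E[f | \<theta>_U])^2) = 2 D^tot_{U^c}(f; s). Integrating over s
  (Fubini), the averaged numerator becomes 2 \<integral> D^tot, while the denominator \<integral> E f^2 dominates \<integral> D.\<close>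

lemma (in prob_space) integrable_square_diff_const:
  fixes X :: "'a \<Rightarrow> real"
  assumes "integrable M X" "integrable M (\<lambda>x. (X x)\<^sup>2)"
  shows "integrable M (\<lambda>x. (X x - c)\<^sup>2)"
proof -
  have "(\<lambda>x. (X x - c)\<^sup>2) = (\<lambda>x. (X x)\<^sup>2 - 2 * c * X x + c\<^sup>2)"
    by (simp add: power2_diff algebra_simps)
  then show ?thesis using assms by simp
qed

lemma (in prob_space) expectation_square_diff_const:
  fixes X :: "'a \<Rightarrow> real"
  assumes X: "integrable M X" "integrable M (\<lambda>x. (X x)\<^sup>2)"
  shows "expectation (\<lambda>x. (X x - c)\<^sup>2) = variance X + (expectation X - c)\<^sup>2"
proof -
  have "expectation (\<lambda>x. (X x - c)\<^sup>2) = expectation (\<lambda>x. (X x)\<^sup>2) - 2 * c * expectation X + c\<^sup>2"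
    using X by (simp add: power2_diff prob_space)
  then show ?thesis unfolding variance_eq[OF X] by (simp add: power2_eq_square algebra_simps)
qed

lemma (in prob_space) nn_integral_pair_square_diff:
  fixes X :: "'a \<Rightarrow> real"
  assumes Xm: "X \<in> borel_measurable M" and X2: "integrable M (\<lambda>x. (X x)\<^sup>2)"
  shows "(\<integral>\<^sup>+y. \<integral>\<^sup>+z. ennreal ((X z - X y)\<^sup>2) \<partial>M \<partial>M) = ennreal (2 * variance X)"
proof -
  have X: "integrable M X" by (rule square_integrable_imp_integrable[OF Xm X2])
  have inner: "(\<integral>\<^sup>+z. ennreal ((X z - X y)\<^sup>2) \<partial>M) = ennreal (variance X + (expectation X - X y)\<^sup>2)" for y
    using nn_integral_eq_integral[OF integrable_square_diff_const[OF X X2, of "X y"]]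
      expectation_square_diff_const[OF X X2, of "X y"]
    by simp
  have "(\<integral>\<^sup>+y. \<integral>\<^sup>+z. ennreal ((X z - X y)\<^sup>2) \<partial>M \<partial>M)
      = ennreal (expectation (\<lambda>y. variance X + (X y - expectation X)\<^sup>2))"
    unfolding inner power2_commute[of "expectation X"]
    by (rule nn_integral_eq_integral)
      (use integrable_square_diff_const[OF X X2] variance_positive in auto)
  also have "expectation (\<lambda>y. variance X + (X y - expectation X)\<^sup>2) = 2 * variance X"
    using integrable_square_diff_const[OF X X2] by (simp add: prob_space)
  finally show ?thesis .
qed

lemma merge_pt_eq_merge: "\<eta> \<in> space (PiM V M) \<Longrightarrow> merge_pt U \<theta> \<eta> = merge U V (\<theta>, \<eta>)"
  by (auto simp: merge_pt_def merge_def space_PiM PiE_iff extensional_def fun_eq_iff)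

lemma merge_pt_merge_pt [simp]: "merge_pt U (merge_pt U x y) z = merge_pt U x z"
  by (simp add: merge_pt_def fun_eq_iff)

lemma measurable_merge_pt:
  fixes M :: "nat \<Rightarrow> real measure"
  assumes a: "a \<in> measurable N (PiM K M)" and UK: "U \<subseteq> K" and b: "b \<in> measurable N (PiM V M)"
  shows "(\<lambda>\<omega>. merge_pt U (a \<omega>) (b \<omega>)) \<in> measurable N (PiM (U \<union> V) M)"
proof -
  have "(\<lambda>\<omega>. merge_pt U (a \<omega>) (b \<omega>)) = (\<lambda>\<omega> j. if j \<in> U then a \<omega> j else b \<omega> j)"
    by (simp add: merge_pt_def fun_eq_iff)
  moreover have "(\<lambda>\<omega> j. if j \<in> U then a \<omega> j else b \<omega> j) \<in> measurable N (PiM (U \<union> V) M)"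
  proof (rule measurable_PiM_single')
    fix j assume "j \<in> U \<union> V"
    then show "(\<lambda>\<omega>. if j \<in> U then a \<omega> j else b \<omega> j) \<in> measurable N (M j)"
      using UK measurable_compose[OF a measurable_component_singleton[of j K M]]
        measurable_compose[OF b measurable_component_singleton[of j V M]] by (cases "j \<in> U") auto
  next
    show "(\<lambda>\<omega> j. if j \<in> U then a \<omega> j else b \<omega> j) \<in> space N \<rightarrow> (\<Pi>\<^sub>E i\<in>U \<union> V. space (M i))"
    proof
      fix \<omega> assume "\<omega> \<in> space N"
      then have "a \<omega> \<in> (\<Pi>\<^sub>E i\<in>K. space (M i))" "b \<omega> \<in> (\<Pi>\<^sub>E i\<in>V. space (M i))"
        using measurable_space[OF a] measurable_space[OF b] by (auto simp: space_PiM)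
      then show "(\<lambda>j. if j \<in> U then a \<omega> j else b \<omega> j) \<in> (\<Pi>\<^sub>E i\<in>U \<union> V. space (M i))"
        using UK by (auto simp: PiE_iff extensional_def)
    qed
  qed
  ultimately show ?thesis by simp
qed

lemma measurable_merge_pt_PiM [measurable]:
  fixes M :: "nat \<Rightarrow> real measure"
  assumes "a \<in> measurable N (PiM K M)" "b \<in> measurable N (PiM (I - U) M)" "U \<subseteq> K" "U \<subseteq> I"
  shows "(\<lambda>\<omega>. merge_pt U (a \<omega>) (b \<omega>)) \<in> measurable N (PiM I M)"
  using measurable_merge_pt[OF assms(1,3,2)] assms(4) by (simp add: Un_absorb1)

lemma measurable_merge_pt_section:
  fixes M :: "nat \<Rightarrow> real measure"
  assumes "g \<in> borel_measurable (PiM I M)" "U \<subseteq> I" "x \<in> space (PiM U M)"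
  shows "(\<lambda>y. g (merge_pt U x y)) \<in> borel_measurable (PiM (I - U) M)"
  using measurable_merge_pt_PiM[OF measurable_const[OF assms(3)] measurable_ident_sets[OF refl] subset_refl assms(2)]
  by (rule measurable_compose[OF _ assms(1)])

context
  fixes M :: "nat \<Rightarrow> real measure" and U V :: "nat set"
  assumes sigma_finite: "\<And>i. sigma_finite_measure (M i)"
    and disjoint: "U \<inter> V = {}" and finite: "finite U" "finite V"
begin

interpretation product_sigma_finite M
  by (simp add: product_sigma_finite_def sigma_finite)

lemma distr_merge_pt:
  "distr (PiM U M \<Otimes>\<^sub>M PiM V M) (PiM (U \<union> V) M) (\<lambda>z. merge_pt U (fst z) (snd z)) = PiM (U \<union> V) M"
proof -
  have "distr (PiM U M \<Otimes>\<^sub>M PiM V M) (PiM (U \<union> V) M) (\<lambda>z. merge_pt U (fst z) (snd z))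
      = distr (PiM U M \<Otimes>\<^sub>M PiM V M) (PiM (U \<union> V) M) (merge U V)"
    by (rule distr_cong) (auto simp: space_pair_measure merge_pt_eq_merge)
  also have "\<dots> = PiM (U \<union> V) M" by (rule distr_merge[OF disjoint finite])
  finally show ?thesis .
qed

lemma integrable_merge_pt_iff:
  fixes \<phi> :: "(nat \<Rightarrow> real) \<Rightarrow> real"
  assumes "\<phi> \<in> borel_measurable (PiM (U \<union> V) M)"
  shows "integrable (PiM U M \<Otimes>\<^sub>M PiM V M) (\<lambda>z. \<phi> (merge_pt U (fst z) (snd z)))
    \<longleftrightarrow> integrable (PiM (U \<union> V) M) \<phi>"
  by (subst integrable_distr_eq[symmetric, OF measurable_merge_pt assms])
    (auto simp: distr_merge_pt)

lemma integral_PiM_merge_pt: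
  fixes \<phi> :: "(nat \<Rightarrow> real) \<Rightarrow> real"
  assumes "integrable (PiM (U \<union> V) M) \<phi>"
  shows "(\<integral>\<theta>. \<phi> \<theta> \<partial>PiM (U \<union> V) M) = (\<integral>x. \<integral>y. \<phi> (merge_pt U x y) \<partial>PiM V M \<partial>PiM U M)"
  unfolding product_integral_fold[OF disjoint finite assms]
  by (intro Bochner_Integration.integral_cong refl) (simp add: merge_pt_eq_merge)

lemma nn_integral_PiM_merge_pt:
  assumes "\<phi> \<in> borel_measurable (PiM (U \<union> V) M)"
  shows "(\<integral>\<^sup>+\<theta>. \<phi> \<theta> \<partial>PiM (U \<union> V) M) = (\<integral>\<^sup>+x. \<integral>\<^sup>+y. \<phi> (merge_pt U x y) \<partial>PiM V M \<partial>PiM U M)"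
  unfolding product_nn_integral_fold[OF disjoint finite assms]
  by (intro nn_integral_cong) (simp add: merge_pt_eq_merge)

end

lemma square_integrable_sections:
  fixes M :: "nat \<Rightarrow> real measure" and g :: "(nat \<Rightarrow> real) \<Rightarrow> real"
  assumes prob: "\<And>i. prob_space (M i)" and "finite I" "U \<subseteq> I"
    and gm: "g \<in> borel_measurable (PiM I M)" and g2: "integrable (PiM I M) (\<lambda>\<theta>. (g \<theta>)\<^sup>2)"
  shows "AE x in PiM U M. integrable (PiM (I - U) M) (\<lambda>y. (g (merge_pt U x y))\<^sup>2)"
    and "integrable (PiM U M) (\<lambda>x. \<integral>y. (g (merge_pt U x y))\<^sup>2 \<partial>PiM (I - U) M)"
    and "(\<integral>x. \<integral>y. (g (merge_pt U x y))\<^sup>2 \<partial>PiM (I - U) M \<partial>PiM U M) = (\<integral>\<theta>. (g \<theta>)\<^sup>2 \<partial>PiM I M)"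
proof -
  have I: "U \<inter> (I - U) = {}" "finite U" "finite (I - U)" and UI: "U \<union> I = I"
    using assms(2,3) finite_subset by auto
  have sf: "\<And>i. sigma_finite_measure (M i)" by (simp add: prob prob_space_imp_sigma_finite)
  interpret PU: prob_space "PiM U M" by (rule prob_space_PiM[OF prob])
  interpret PV: prob_space "PiM (I - U) M" by (rule prob_space_PiM[OF prob])
  interpret UV: pair_sigma_finite "PiM U M" "PiM (I - U) M" ..
  have "integrable (PiM U M \<Otimes>\<^sub>M PiM (I - U) M) (\<lambda>z. (g (merge_pt U (fst z) (snd z)))\<^sup>2)"
    using integrable_merge_pt_iff[of M U "I - U", OF sf I, where \<phi>="\<lambda>\<theta>. (g \<theta>)\<^sup>2"] gm g2 by (simp add: UI)
  from UV.AE_integrable_fst'[OF this] UV.integrable_fst'[OF this]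
  show "AE x in PiM U M. integrable (PiM (I - U) M) (\<lambda>y. (g (merge_pt U x y))\<^sup>2)"
    and "integrable (PiM U M) (\<lambda>x. \<integral>y. (g (merge_pt U x y))\<^sup>2 \<partial>PiM (I - U) M)"
    by simp_all
  show "(\<integral>x. \<integral>y. (g (merge_pt U x y))\<^sup>2 \<partial>PiM (I - U) M \<partial>PiM U M) = (\<integral>\<theta>. (g \<theta>)\<^sup>2 \<partial>PiM I M)"
    using integral_PiM_merge_pt[of M U "I - U", OF sf I, where \<phi>="\<lambda>\<theta>. (g \<theta>)\<^sup>2"] g2 by (simp add: UI)
qed

lemma sob_condE_moments:
  fixes M :: "nat \<Rightarrow> real measure" and f :: "'a \<Rightarrow> (nat \<Rightarrow> real) \<Rightarrow> real"
  assumes prob: "\<And>i. prob_space (M i)" and I: "finite I" "U \<subseteq> I"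
    and fm: "f s \<in> borel_measurable (PiM I M)" and f2: "integrable (PiM I M) (\<lambda>\<theta>. (f s \<theta>)\<^sup>2)"
  shows "sob_condE M I U f s \<in> borel_measurable (PiM U M)"
    and "integrable (PiM U M) (\<lambda>x. (sob_condE M I U f s x)\<^sup>2)"
    and "(\<integral>x. sob_condE M I U f s x \<partial>PiM U M) = sob_f0 M I f s"
    and "(\<integral>x. (sob_condE M I U f s x)\<^sup>2 \<partial>PiM U M) \<le> (\<integral>\<theta>. (f s \<theta>)\<^sup>2 \<partial>PiM I M)"
    and "AE x in PiM U M. (sob_condE M I U f s x)\<^sup>2 \<le> (\<integral>y. (f s (merge_pt U x y))\<^sup>2 \<partial>PiM (I - U) M)"
proof -
  interpret PV: prob_space "PiM (I - U) M" by (rule prob_space_PiM[OF prob])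
  interpret PI: prob_space "PiM I M" by (rule prob_space_PiM[OF prob])
  have sf: "\<And>i. sigma_finite_measure (M i)" by (simp add: prob prob_space_imp_sigma_finite)
  have I': "U \<inter> (I - U) = {}" "finite U" "finite (I - U)" and UI: "U \<union> I = I"
    using I finite_subset by auto
  define c where "c = sob_condE M I U f s"
  have c: "c = (\<lambda>x. \<integral>y. f s (merge_pt U x y) \<partial>PiM (I - U) M)"
    by (simp add: c_def fun_eq_iff sob_condE_def)
  define F where "F = (\<lambda>x. \<integral>y. (f s (merge_pt U x y))\<^sup>2 \<partial>PiM (I - U) M)"
  note sections = square_integrable_sections[where M=M and g="f s", OF prob I fm f2, folded F_def]
  note [measurable] = fm
  show cm: "sob_condE M I U f s \<in> borel_measurable (PiM U M)"
    unfolding c[unfolded c_def] by measurable (use I in auto)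
  show c2F: "AE x in PiM U M. (c x)\<^sup>2 \<le> F x"
    using sections(1) AE_space
  proof eventually_elim
    case (elim x)
    have "integrable (PiM (I - U) M) (\<lambda>y. f s (merge_pt U x y))"
      using measurable_merge_pt_section[OF fm I(2) elim(2)] elim(1)
      by (rule PV.square_integrable_imp_integrable)
    then show ?case
      using PV.variance_positive[of "\<lambda>y. f s (merge_pt U x y)"] PV.variance_eq[OF _ elim(1)]
      unfolding c_def sob_condE_def F_def by linarith
  qed
  have F_nonneg: "0 \<le> F x" for x
    unfolding F_def by (rule Bochner_Integration.integral_nonneg) simp
  show c2: "integrable (PiM U M) (\<lambda>x. (sob_condE M I U f s x)\<^sup>2)"
    by (rule Bochner_Integration.integrable_bound[OF sections(2)])
      (use cm c2F F_nonneg in \<open>auto simp: c_def elim!: eventually_mono\<close>)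
  show "(\<integral>x. sob_condE M I U f s x \<partial>PiM U M) = sob_f0 M I f s"
    using integral_PiM_merge_pt[of M U "I - U", OF sf I', where \<phi>="f s"] PI.square_integrable_imp_integrable[OF fm f2]
    by (simp add: sob_f0_def sob_condE_def UI)
  show "(\<integral>x. (sob_condE M I U f s x)\<^sup>2 \<partial>PiM U M) \<le> (\<integral>\<theta>. (f s \<theta>)\<^sup>2 \<partial>PiM I M)"
    unfolding sections(3)[symmetric] c_def[symmetric]
    by (rule integral_mono_AE[OF c2[folded c_def] sections(2) c2F])
qed

lemma sob_D_eq:
  fixes M :: "nat \<Rightarrow> real measure" and f :: "'a \<Rightarrow> (nat \<Rightarrow> real) \<Rightarrow> real"
  assumes prob: "\<And>i. prob_space (M i)"
    and fm: "f s \<in> borel_measurable (PiM I M)" and f2: "integrable (PiM I M) (\<lambda>\<theta>. (f s \<theta>)\<^sup>2)"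
  shows "sob_D M I f s = (\<integral>\<theta>. (f s \<theta>)\<^sup>2 \<partial>PiM I M) - (sob_f0 M I f s)\<^sup>2"
proof -
  interpret PI: prob_space "PiM I M" by (rule prob_space_PiM[OF prob])
  show ?thesis unfolding sob_D_def sob_f0_def
    by (rule PI.variance_eq[OF PI.square_integrable_imp_integrable[OF fm f2] f2])
qed

lemma sob_Dtot_eq:
  fixes M :: "nat \<Rightarrow> real measure" and f :: "'a \<Rightarrow> (nat \<Rightarrow> real) \<Rightarrow> real"
  assumes prob: "\<And>i. prob_space (M i)" and I: "finite I" "U \<subseteq> I"
    and fm: "f s \<in> borel_measurable (PiM I M)" and f2: "integrable (PiM I M) (\<lambda>\<theta>. (f s \<theta>)\<^sup>2)"
  shows "sob_Dtot M I (I - U) f s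
    = (\<integral>\<theta>. (f s \<theta>)\<^sup>2 \<partial>PiM I M) - (\<integral>x. (sob_condE M I U f s x)\<^sup>2 \<partial>PiM U M)"
proof -
  interpret PU: prob_space "PiM U M" by (rule prob_space_PiM[OF prob])
  note c = sob_condE_moments[where M=M and f=f and s=s, OF prob I fm f2]
  have "sob_DV M I U f s = (\<integral>x. (sob_condE M I U f s x)\<^sup>2 \<partial>PiM U M) - (sob_f0 M I f s)\<^sup>2"
    unfolding sob_DV_def c(3)[symmetric]
    by (rule PU.variance_eq[OF PU.square_integrable_imp_integrable[OF c(1,2)] c(2)])
  moreover have "I - (I - U) = U" using I by auto
  ultimately show ?thesis by (simp add: sob_Dtot_def sob_D_eq[where M=M and f=f and s=s, OF prob fm f2])
qed

lemma sob_Dtot_bounds: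
  fixes M :: "nat \<Rightarrow> real measure" and f :: "'a \<Rightarrow> (nat \<Rightarrow> real) \<Rightarrow> real"
  assumes prob: "\<And>i. prob_space (M i)" and I: "finite I" "U \<subseteq> I"
    and fm: "f s \<in> borel_measurable (PiM I M)" and f2: "integrable (PiM I M) (\<lambda>\<theta>. (f s \<theta>)\<^sup>2)"
  shows "0 \<le> sob_Dtot M I (I - U) f s"
    and "sob_Dtot M I (I - U) f s \<le> sob_D M I f s"
    and "sob_D M I f s \<le> (\<integral>\<theta>. (f s \<theta>)\<^sup>2 \<partial>PiM I M)"
proof -
  show "0 \<le> sob_Dtot M I (I - U) f s"
    using sob_condE_moments(4)[where M=M and f=f and s=s, OF prob I fm f2]
    by (simp add: sob_Dtot_eq[where M=M and f=f and s=s, OF prob I fm f2])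
  show "sob_Dtot M I (I - U) f s \<le> sob_D M I f s"
    unfolding sob_Dtot_def sob_DV_def by (simp add: Bochner_Integration.integral_nonneg)
  show "sob_D M I f s \<le> (\<integral>\<theta>. (f s \<theta>)\<^sup>2 \<partial>PiM I M)"
    by (simp add: sob_D_eq[where M=M and f=f and s=s, OF prob fm f2])
qed

lemma nn_integral_resample_fold:
  fixes M :: "nat \<Rightarrow> real measure" and g :: "(nat \<Rightarrow> real) \<Rightarrow> real"
  assumes prob: "\<And>i. prob_space (M i)" and I: "finite I" "U \<subseteq> I"
    and gm[measurable]: "g \<in> borel_measurable (PiM I M)"
  shows "(\<integral>\<^sup>+\<eta>. \<integral>\<^sup>+\<theta>. ennreal ((g \<theta> - g (merge_pt U \<theta> \<eta>))\<^sup>2) \<partial>PiM I M \<partial>PiM (I - U) M)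
    = (\<integral>\<^sup>+x. \<integral>\<^sup>+\<eta>. \<integral>\<^sup>+y. ennreal ((g (merge_pt U x y) - g (merge_pt U x \<eta>))\<^sup>2)
         \<partial>PiM (I - U) M \<partial>PiM (I - U) M \<partial>PiM U M)"
proof -
  have I': "U \<inter> (I - U) = {}" "finite U" "finite (I - U)" and UI: "U \<union> I = I"
    using I finite_subset by auto
  have sf: "\<And>i. sigma_finite_measure (M i)" by (simp add: prob prob_space_imp_sigma_finite)
  interpret PU: prob_space "PiM U M" by (rule prob_space_PiM[OF prob])
  interpret PV: prob_space "PiM (I - U) M" by (rule prob_space_PiM[OF prob])
  interpret UV: pair_sigma_finite "PiM U M" "PiM (I - U) M" ..
  have "(\<integral>\<^sup>+\<theta>. ennreal ((g \<theta> - g (merge_pt U \<theta> \<eta>))\<^sup>2) \<partial>PiM I M)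
      = (\<integral>\<^sup>+x. \<integral>\<^sup>+y. ennreal ((g (merge_pt U x y) - g (merge_pt U x \<eta>))\<^sup>2) \<partial>PiM (I - U) M \<partial>PiM U M)"
    if "\<eta> \<in> space (PiM (I - U) M)" for \<eta>
  proof -
    have "(\<lambda>\<theta>. ennreal ((g \<theta> - g (merge_pt U \<theta> \<eta>))\<^sup>2)) \<in> borel_measurable (PiM (U \<union> (I - U)) M)"
      using UI by simp (measurable, use I that in auto)
    from nn_integral_PiM_merge_pt[of M U "I - U", OF sf I' this] show ?thesis by (simp add: UI)
  qed
  then have "(\<integral>\<^sup>+\<eta>. \<integral>\<^sup>+\<theta>. ennreal ((g \<theta> - g (merge_pt U \<theta> \<eta>))\<^sup>2) \<partial>PiM I M \<partial>PiM (I - U) M)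
      = (\<integral>\<^sup>+\<eta>. \<integral>\<^sup>+x. \<integral>\<^sup>+y. ennreal ((g (merge_pt U x y) - g (merge_pt U x \<eta>))\<^sup>2)
          \<partial>PiM (I - U) M \<partial>PiM U M \<partial>PiM (I - U) M)"
    by (simp cong: nn_integral_cong)
  also have "\<dots> = (\<integral>\<^sup>+x. \<integral>\<^sup>+\<eta>. \<integral>\<^sup>+y. ennreal ((g (merge_pt U x y) - g (merge_pt U x \<eta>))\<^sup>2)
      \<partial>PiM (I - U) M \<partial>PiM (I - U) M \<partial>PiM U M)"
    by (rule UV.Fubini'[where f="\<lambda>x \<eta>. \<integral>\<^sup>+y. ennreal ((g (merge_pt U x y) - g (merge_pt U x \<eta>))\<^sup>2)
          \<partial>PiM (I - U) M"]) (measurable, use I in auto)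
  finally show ?thesis .
qed

lemma nn_integral_reduced_model_sq_diff:
  fixes M :: "nat \<Rightarrow> real measure" and f :: "'a \<Rightarrow> (nat \<Rightarrow> real) \<Rightarrow> real"
  assumes prob: "\<And>i. prob_space (M i)" and I: "finite I" "U \<subseteq> I"
    and fm: "f s \<in> borel_measurable (PiM I M)" and f2: "integrable (PiM I M) (\<lambda>\<theta>. (f s \<theta>)\<^sup>2)"
  shows "(\<integral>\<^sup>+\<eta>. \<integral>\<^sup>+\<theta>. ennreal ((f s \<theta> - reduced_model U f \<eta> s \<theta>)\<^sup>2) \<partial>PiM I M \<partial>PiM (I - U) M)
    = ennreal (2 * sob_Dtot M I (I - U) f s)"
proof -
  interpret PV: prob_space "PiM (I - U) M" by (rule prob_space_PiM[OF prob])
  define h where "h x y = f s (merge_pt U x y)" for x y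
  define F where "F = (\<lambda>x. \<integral>y. (h x y)\<^sup>2 \<partial>PiM (I - U) M)"
  define c where "c = sob_condE M I U f s"
  have c: "c x = (\<integral>y. h x y \<partial>PiM (I - U) M)" for x
    by (simp add: c_def h_def sob_condE_def)
  note sections = square_integrable_sections[where M=M and g="f s", OF prob I fm f2, folded h_def F_def]
  note moments = sob_condE_moments[where M=M and f=f and s=s, OF prob I fm f2, folded c_def]
  have "(\<integral>\<^sup>+\<eta>. \<integral>\<^sup>+\<theta>. ennreal ((f s \<theta> - reduced_model U f \<eta> s \<theta>)\<^sup>2) \<partial>PiM I M \<partial>PiM (I - U) M)
      = (\<integral>\<^sup>+x. \<integral>\<^sup>+\<eta>. \<integral>\<^sup>+y. ennreal ((h x y - h x \<eta>)\<^sup>2) \<partial>PiM (I - U) M \<partial>PiM (I - U) M \<partial>PiM U M)"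
    using nn_integral_resample_fold[OF prob I fm] by (simp add: reduced_model_def h_def)
  also have "\<dots> = (\<integral>\<^sup>+x. ennreal (2 * (F x - (c x)\<^sup>2)) \<partial>PiM U M)"
  proof (rule nn_integral_cong_AE)
    show "AE x in PiM U M. (\<integral>\<^sup>+\<eta>. \<integral>\<^sup>+y. ennreal ((h x y - h x \<eta>)\<^sup>2) \<partial>PiM (I - U) M \<partial>PiM (I - U) M)
        = ennreal (2 * (F x - (c x)\<^sup>2))"
      using sections(1) AE_space
    proof eventually_elim
      case (elim x)
      have hx: "h x \<in> borel_measurable (PiM (I - U) M)"
        using measurable_merge_pt_section[OF fm I(2) elim(2)] by (simp add: h_def[abs_def])
      have "PV.variance (h x) = F x - (c x)\<^sup>2"
        unfolding F_def c by (rule PV.variance_eq[OF PV.square_integrable_imp_integrable[OF hx elim(1)] elim(1)])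
      then show ?case by (simp add: PV.nn_integral_pair_square_diff[OF hx elim(1)])
    qed
  qed
  also have "\<dots> = ennreal (\<integral>x. 2 * (F x - (c x)\<^sup>2) \<partial>PiM U M)"
    by (rule nn_integral_eq_integral)
      (use sections(2) moments(2) moments(5) in \<open>auto simp: F_def h_def elim!: eventually_mono\<close>)
  also have "(\<integral>x. 2 * (F x - (c x)\<^sup>2) \<partial>PiM U M) = 2 * sob_Dtot M I (I - U) f s"
    using sections(2,3) moments(2)
    by (simp add: sob_Dtot_eq[where M=M and f=f and s=s, OF prob I fm f2] c_def F_def h_def)
  finally show ?thesis .
qed

lemma nn_integral_reduced_model_error:
  fixes M :: "nat \<Rightarrow> real measure" and f :: "'a \<Rightarrow> (nat \<Rightarrow> real) \<Rightarrow> real"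
  assumes prob: "\<And>i. prob_space (M i)" and I: "finite I" "U \<subseteq> I"
    and fm: "f s \<in> borel_measurable (PiM I M)" and f2: "integrable (PiM I M) (\<lambda>\<theta>. (f s \<theta>)\<^sup>2)"
  shows "(\<integral>\<^sup>+\<eta>. ennreal (\<integral>\<theta>. (f s \<theta> - reduced_model U f \<eta> s \<theta>)\<^sup>2 \<partial>PiM I M) \<partial>PiM (I - U) M)
    = ennreal (2 * sob_Dtot M I (I - U) f s)"
proof -
  interpret PV: prob_space "PiM (I - U) M" by (rule prob_space_PiM[OF prob])
  interpret PI: prob_space "PiM I M" by (rule prob_space_PiM[OF prob])
  define N where "N \<eta> = (\<integral>\<^sup>+\<theta>. ennreal ((f s \<theta> - reduced_model U f \<eta> s \<theta>)\<^sup>2) \<partial>PiM I M)" for \<eta>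
  note [measurable] = fm I(2)
  have N_meas: "N \<in> borel_measurable (PiM (I - U) M)"
    unfolding N_def[abs_def] reduced_model_def by measurable
  have total: "(\<integral>\<^sup>+\<eta>. N \<eta> \<partial>PiM (I - U) M) = ennreal (2 * sob_Dtot M I (I - U) f s)"
    unfolding N_def by (rule nn_integral_reduced_model_sq_diff[where M=M and f=f and s=s, OF prob I fm f2])
  have "AE \<eta> in PiM (I - U) M. N \<eta> \<noteq> \<infinity>"
    by (rule nn_integral_PInf_AE[OF N_meas]) (simp add: total)
  then have "AE \<eta> in PiM (I - U) M. ennreal (\<integral>\<theta>. (f s \<theta> - reduced_model U f \<eta> s \<theta>)\<^sup>2 \<partial>PiM I M) = N \<eta>"
    using AE_space
  proof eventually_elim
    case (elim \<eta>)
    have "(\<lambda>\<theta>. (f s \<theta> - reduced_model U f \<eta> s \<theta>)\<^sup>2) \<in> borel_measurable (PiM I M)"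
      unfolding reduced_model_def by measurable (use I elim in auto)
    then show ?case
      using elim by (simp add: N_def integral_eq_nn_integral less_top)
  qed
  then show ?thesis by (simp add: total[symmetric] cong: nn_integral_cong_AE)
qed

lemma
  fixes M :: "nat \<Rightarrow> real measure" and S :: "'a measure" and f :: "'a \<Rightarrow> (nat \<Rightarrow> real) \<Rightarrow> real"
  assumes prob: "\<And>i. prob_space (M i)" and I[measurable]: "U \<subseteq> I"
    and fm[measurable]: "(\<lambda>(s, \<theta>). f s \<theta>) \<in> borel_measurable (S \<Otimes>\<^sub>M PiM I M)"
  shows borel_measurable_sob_D: "sob_D M I f \<in> borel_measurable S"
    and borel_measurable_sob_Dtot: "sob_Dtot M I (I - U) f \<in> borel_measurable S"
    and borel_measurable_reduced_model_error:
      "(\<lambda>(s, \<eta>). \<integral>\<theta>. (f s \<theta> - reduced_model U f \<eta> s \<theta>)\<^sup>2 \<partial>PiM I M) \<in> borel_measurable (S \<Otimes>\<^sub>M PiM (I - U) M)"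
proof -
  interpret PU: prob_space "PiM U M" by (rule prob_space_PiM[OF prob])
  interpret PV: prob_space "PiM (I - U) M" by (rule prob_space_PiM[OF prob])
  interpret PI: prob_space "PiM I M" by (rule prob_space_PiM[OF prob])
  have IU: "I - (I - U) = U" using I by auto
  show "sob_D M I f \<in> borel_measurable S"
    unfolding sob_D_def[abs_def] sob_f0_def by measurable
  show "sob_Dtot M I (I - U) f \<in> borel_measurable S"
    unfolding sob_Dtot_def[abs_def] sob_D_def sob_DV_def sob_condE_def sob_f0_def IU
    by measurable
  show "(\<lambda>(s, \<eta>). \<integral>\<theta>. (f s \<theta> - reduced_model U f \<eta> s \<theta>)\<^sup>2 \<partial>PiM I M) \<in> borel_measurable (S \<Otimes>\<^sub>M PiM (I - U) M)"
    unfolding reduced_model_def by measurable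
qed

lemma AE_square_integrable_section:
  fixes f :: "'a \<Rightarrow> 'b \<Rightarrow> real"
  assumes S: "sigma_finite_measure S" and T: "sigma_finite_measure T"
    and fm: "(\<lambda>(s, \<theta>). f s \<theta>) \<in> borel_measurable (S \<Otimes>\<^sub>M T)"
    and f2: "integrable (S \<Otimes>\<^sub>M T) (\<lambda>(s, \<theta>). (f s \<theta>)\<^sup>2)"
  shows "AE s in S. f s \<in> borel_measurable T \<and> integrable T (\<lambda>\<theta>. (f s \<theta>)\<^sup>2)"
proof -
  interpret ST: pair_sigma_finite S T by (simp add: pair_sigma_finite_def S T)
  show ?thesis
    using ST.AE_integrable_fst'[OF f2] AE_space
    by eventually_elim (use measurable_Pair2[OF fm] in simp)
qed

lemma integral_sob_bounds:
  fixes M :: "nat \<Rightarrow> real measure" and S :: "'a measure" and f :: "'a \<Rightarrow> (nat \<Rightarrow> real) \<Rightarrow> real"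
  assumes prob: "\<And>i. prob_space (M i)" and I: "finite I" "U \<subseteq> I" and S: "sigma_finite_measure S"
    and fm: "(\<lambda>(s, \<theta>). f s \<theta>) \<in> borel_measurable (S \<Otimes>\<^sub>M PiM I M)"
    and f2: "integrable (S \<Otimes>\<^sub>M PiM I M) (\<lambda>(s, \<theta>). (f s \<theta>)\<^sup>2)"
  shows "0 \<le> (\<integral>s. sob_Dtot M I (I - U) f s \<partial>S)"
    and "(\<integral>s. sob_Dtot M I (I - U) f s \<partial>S) \<le> (\<integral>s. sob_D M I f s \<partial>S)"
    and "(\<integral>s. sob_D M I f s \<partial>S) \<le> (\<integral>s. \<integral>\<theta>. (f s \<theta>)\<^sup>2 \<partial>PiM I M \<partial>S)"
proof -
  interpret PI: prob_space "PiM I M" by (rule prob_space_PiM[OF prob])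
  interpret SP: pair_sigma_finite S "PiM I M" by (simp add: pair_sigma_finite_def S PI.sigma_finite_measure_axioms)
  have E2: "integrable S (\<lambda>s. \<integral>\<theta>. (f s \<theta>)\<^sup>2 \<partial>PiM I M)"
    using SP.integrable_fst'[OF f2] by simp
  have bounds: "AE s in S. 0 \<le> sob_Dtot M I (I - U) f s \<and> sob_Dtot M I (I - U) f s \<le> sob_D M I f s
      \<and> sob_D M I f s \<le> (\<integral>\<theta>. (f s \<theta>)\<^sup>2 \<partial>PiM I M)"
    using AE_square_integrable_section[OF S PI.sigma_finite_measure_axioms fm f2]
    by eventually_elim (use sob_Dtot_bounds[where M=M and f=f, OF prob I] in blast)
  have D: "integrable S (sob_D M I f)"
    by (rule Bochner_Integration.integrable_bound[OF E2 borel_measurable_sob_D[OF prob I(2) fm]])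
      (use bounds in \<open>eventually_elim, auto\<close>)
  have Dtot: "integrable S (sob_Dtot M I (I - U) f)"
    by (rule Bochner_Integration.integrable_bound[OF E2 borel_measurable_sob_Dtot[OF prob I(2) fm]])
      (use bounds in \<open>eventually_elim, auto\<close>)
  show "0 \<le> (\<integral>s. sob_Dtot M I (I - U) f s \<partial>S)"
    using bounds by (intro integral_nonneg_AE) auto
  show "(\<integral>s. sob_Dtot M I (I - U) f s \<partial>S) \<le> (\<integral>s. sob_D M I f s \<partial>S)"
    using bounds by (intro integral_mono_AE[OF Dtot D]) auto
  show "(\<integral>s. sob_D M I f s \<partial>S) \<le> (\<integral>s. \<integral>\<theta>. (f s \<theta>)\<^sup>2 \<partial>PiM I M \<partial>S)"
    using bounds by (intro integral_mono_AE[OF D E2]) auto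
qed

lemma integral_reduced_model_error:
  fixes M :: "nat \<Rightarrow> real measure" and f :: "'a \<Rightarrow> (nat \<Rightarrow> real) \<Rightarrow> real"
  assumes prob: "\<And>i. prob_space (M i)" and I: "finite I" "U \<subseteq> I"
    and fm: "f s \<in> borel_measurable (PiM I M)" and f2: "integrable (PiM I M) (\<lambda>\<theta>. (f s \<theta>)\<^sup>2)"
  shows "(\<integral>\<eta>. \<integral>\<theta>. (f s \<theta> - reduced_model U f \<eta> s \<theta>)\<^sup>2 \<partial>PiM I M \<partial>PiM (I - U) M)
    = 2 * sob_Dtot M I (I - U) f s"
proof -
  interpret PI: prob_space "PiM I M" by (rule prob_space_PiM[OF prob])
  note [measurable] = fm
  have "(\<lambda>\<eta>. \<integral>\<theta>. (f s \<theta> - reduced_model U f \<eta> s \<theta>)\<^sup>2 \<partial>PiM I M) \<in> borel_measurable (PiM (I - U) M)"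
    unfolding reduced_model_def by measurable (use I in auto)
  then show ?thesis
    using nn_integral_reduced_model_error[where M=M and f=f and s=s, OF prob I fm f2]
      sob_Dtot_bounds(1)[where M=M and f=f and s=s, OF prob I fm f2]
    by (simp add: integral_eq_nn_integral)
qed

lemma integrable_reduced_model_error:
  fixes M :: "nat \<Rightarrow> real measure" and S :: "'a measure" and f :: "'a \<Rightarrow> (nat \<Rightarrow> real) \<Rightarrow> real"
  assumes prob: "\<And>i. prob_space (M i)" and I: "finite I" "U \<subseteq> I" and S: "sigma_finite_measure S"
    and fm: "(\<lambda>(s, \<theta>). f s \<theta>) \<in> borel_measurable (S \<Otimes>\<^sub>M PiM I M)"
    and f2: "integrable (S \<Otimes>\<^sub>M PiM I M) (\<lambda>(s, \<theta>). (f s \<theta>)\<^sup>2)"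
  shows "integrable (S \<Otimes>\<^sub>M PiM (I - U) M) (\<lambda>(s, \<eta>). \<integral>\<theta>. (f s \<theta> - reduced_model U f \<eta> s \<theta>)\<^sup>2 \<partial>PiM I M)"
proof -
  interpret PV: prob_space "PiM (I - U) M" by (rule prob_space_PiM[OF prob])
  interpret PI: prob_space "PiM I M" by (rule prob_space_PiM[OF prob])
  interpret SP: pair_sigma_finite S "PiM I M" by (simp add: pair_sigma_finite_def S PI.sigma_finite_measure_axioms)
  define a where "a s \<eta> = (\<integral>\<theta>. (f s \<theta> - reduced_model U f \<eta> s \<theta>)\<^sup>2 \<partial>PiM I M)" for s \<eta>
  have am: "(\<lambda>(s, \<eta>). a s \<eta>) \<in> borel_measurable (S \<Otimes>\<^sub>M PiM (I - U) M)"
    using borel_measurable_reduced_model_error[OF prob I(2) fm] by (simp add: a_def)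
  have "(\<integral>\<^sup>+z. ennreal (case z of (s, \<eta>) \<Rightarrow> a s \<eta>) \<partial>(S \<Otimes>\<^sub>M PiM (I - U) M))
      = (\<integral>\<^sup>+s. \<integral>\<^sup>+\<eta>. ennreal (a s \<eta>) \<partial>PiM (I - U) M \<partial>S)"
    using PV.nn_integral_fst[of "\<lambda>z. ennreal (case z of (s, \<eta>) \<Rightarrow> a s \<eta>)" S] am by simp
  also have "\<dots> \<le> (\<integral>\<^sup>+s. ennreal (2 * (\<integral>\<theta>. (f s \<theta>)\<^sup>2 \<partial>PiM I M)) \<partial>S)"
    using AE_square_integrable_section[OF S PI.sigma_finite_measure_axioms fm f2]
  proof (intro nn_integral_mono_AE, eventually_elim)
    case (elim s)
    then show ?case
      using nn_integral_reduced_model_error[where M=M and f=f and s=s, OF prob I]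
        sob_Dtot_bounds(2,3)[where M=M and f=f and s=s, OF prob I]
      by (auto simp: a_def intro!: ennreal_leI)
  qed
  also have "\<dots> < \<infinity>"
    using SP.integrable_fst'[OF f2]
    by (subst nn_integral_eq_integral) (auto intro!: integral_nonneg_AE)
  finally show ?thesis
    unfolding a_def[symmetric]
    by (intro integrableI_nonneg[OF am]) (auto simp: a_def split_beta')
qed

lemma integral_space_reduced_model_error:
  fixes M :: "nat \<Rightarrow> real measure" and S :: "'a measure" and f :: "'a \<Rightarrow> (nat \<Rightarrow> real) \<Rightarrow> real"
  assumes prob: "\<And>i. prob_space (M i)" and I: "finite I" "U \<subseteq> I" and S: "sigma_finite_measure S"
    and fm: "(\<lambda>(s, \<theta>). f s \<theta>) \<in> borel_measurable (S \<Otimes>\<^sub>M PiM I M)"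
    and f2: "integrable (S \<Otimes>\<^sub>M PiM I M) (\<lambda>(s, \<theta>). (f s \<theta>)\<^sup>2)"
  shows "(\<integral>\<eta>. \<integral>s. \<integral>\<theta>. (f s \<theta> - reduced_model U f \<eta> s \<theta>)\<^sup>2 \<partial>PiM I M \<partial>S \<partial>PiM (I - U) M)
    = 2 * (\<integral>s. sob_Dtot M I (I - U) f s \<partial>S)"
proof -
  interpret S: sigma_finite_measure S by (rule S)
  interpret PV: prob_space "PiM (I - U) M" by (rule prob_space_PiM[OF prob])
  interpret PI: prob_space "PiM I M" by (rule prob_space_PiM[OF prob])
  interpret SV: pair_sigma_finite S "PiM (I - U) M" ..
  have "(\<integral>\<eta>. \<integral>s. \<integral>\<theta>. (f s \<theta> - reduced_model U f \<eta> s \<theta>)\<^sup>2 \<partial>PiM I M \<partial>S \<partial>PiM (I - U) M)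
      = (\<integral>s. \<integral>\<eta>. \<integral>\<theta>. (f s \<theta> - reduced_model U f \<eta> s \<theta>)\<^sup>2 \<partial>PiM I M \<partial>PiM (I - U) M \<partial>S)"
    using SV.Fubini_integral[OF integrable_reduced_model_error[OF prob I S fm f2]] by simp
  also have "\<dots> = (\<integral>s. 2 * sob_Dtot M I (I - U) f s \<partial>S)"
  proof (rule integral_cong_AE)
    show "(\<lambda>s. \<integral>\<eta>. \<integral>\<theta>. (f s \<theta> - reduced_model U f \<eta> s \<theta>)\<^sup>2 \<partial>PiM I M \<partial>PiM (I - U) M) \<in> borel_measurable S"
      using PV.borel_measurable_lebesgue_integral[OF borel_measurable_reduced_model_error[OF prob I(2) fm]] .
    show "(\<lambda>s. 2 * sob_Dtot M I (I - U) f s) \<in> borel_measurable S"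
      using borel_measurable_sob_Dtot[OF prob I(2) fm] by simp
    show "AE s in S. (\<integral>\<eta>. \<integral>\<theta>. (f s \<theta> - reduced_model U f \<eta> s \<theta>)\<^sup>2 \<partial>PiM I M \<partial>PiM (I - U) M)
        = 2 * sob_Dtot M I (I - U) f s"
      using AE_square_integrable_section[OF S PI.sigma_finite_measure_axioms fm f2]
      by eventually_elim (use integral_reduced_model_error[where M=M and f=f, OF prob I] in blast)
  qed
  finally show ?thesis by simp
qed

lemma prob_space_theta_measure:
  assumes "Th \<in> sets borel" "p \<in> borel_measurable borel" "\<And>x. x \<in> Th \<Longrightarrow> 0 \<le> p x"
    and "(\<integral>\<^sup>+x. ennreal (indicator Th x * p x) \<partial>lborel) = 1"
  shows "prob_space (theta_measure Th p)"
proof -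
  have "(\<lambda>x. ennreal (indicator Th x * p x)) \<in> borel_measurable lborel"
    using assms(1,2) by measurable
  then show ?thesis
    using assms(4) by (intro prob_spaceI) (simp add: theta_measure_def emeasure_density)
qed

lemma divide_le_divide_left_bounded:
  fixes t d e :: real
  assumes "0 \<le> t" "t \<le> d" "d \<le> e"
  shows "t / e \<le> t / d"
  using assms by (cases "d = 0") (auto intro!: divide_left_mono)

lemma integral_rel_mse_le_sobol_tot:
  fixes M :: "nat \<Rightarrow> real measure" and X :: "'a::euclidean_space set"
    and f :: "'a \<Rightarrow> (nat \<Rightarrow> real) \<Rightarrow> real"
  assumes prob: "\<And>i. prob_space (M i)" and I: "finite I" "U \<subseteq> I" and X: "X \<in> sets lborel"
    and fm: "(\<lambda>(s, \<theta>). f s \<theta>) \<in> borel_measurable (restrict_space lborel X \<Otimes>\<^sub>M PiM I M)"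
    and f2: "integrable (restrict_space lborel X \<Otimes>\<^sub>M PiM I M) (\<lambda>(s, \<theta>). (f s \<theta>)\<^sup>2)"
  shows "(\<integral>\<eta>. rel_mse M I U f X \<eta> \<partial>PiM (I - U) M) \<le> 2 * sobol_tot M I (I - U) f X"
proof -
  define S where "S = restrict_space lborel X"
  have S: "sigma_finite_measure S"
    unfolding S_def by (rule sigma_finite_measure_restrict_space[OF lborel.sigma_finite_measure_axioms X])
  have LINT: "set_lebesgue_integral lborel X \<phi> = integral\<^sup>L S \<phi>" for \<phi> :: "'a \<Rightarrow> real"
    using X by (simp add: S_def set_lebesgue_integral_def integral_restrict_space)
  note fm = fm[folded S_def] and f2 = f2[folded S_def]
  have "(\<integral>\<eta>. rel_mse M I U f X \<eta> \<partial>PiM (I - U) M)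
      = 2 * (\<integral>s. sob_Dtot M I (I - U) f s \<partial>S) / (\<integral>s. \<integral>\<theta>. (f s \<theta>)\<^sup>2 \<partial>PiM I M \<partial>S)"
    using integral_space_reduced_model_error[OF prob I S fm f2] by (simp add: rel_mse_def LINT)
  moreover have "sobol_tot M I (I - U) f X
      = (\<integral>s. sob_Dtot M I (I - U) f s \<partial>S) / (\<integral>s. sob_D M I f s \<partial>S)"
    by (simp add: sobol_tot_def LINT)
  \<comment> \<open>No positivity of D is needed: if \<integral> D = 0 then also \<integral> D^tot = 0 and both sides vanish.\<close>
  ultimately show ?thesis
    using divide_le_divide_left_bounded[OF integral_sob_bounds[OF prob I S fm f2]] by simp
qed

theorem proposition2p2:
  fixes N :: nat and Th :: "nat \<Rightarrow> real set" and p :: "nat \<Rightarrow> real \<Rightarrow> real"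
    and X :: "'a::euclidean_space set" and f :: "'a \<Rightarrow> (nat \<Rightarrow> real) \<Rightarrow> real"
    and U :: "nat set"
  assumes dim: "DIM('a) \<in> {1, 2, 3}"
    and Th_sets: "\<And>j. j \<in> {1..N} \<Longrightarrow> Th j \<in> sets borel"
    and p_meas: "\<And>j. j \<in> {1..N} \<Longrightarrow> p j \<in> borel_measurable borel"
    and p_nonneg: "\<And>j x. j \<in> {1..N} \<Longrightarrow> x \<in> Th j \<Longrightarrow> 0 \<le> p j x"
    and p_prob: "\<And>j. j \<in> {1..N} \<Longrightarrow> (\<integral>\<^sup>+ x. ennreal (indicator (Th j) x * p j x) \<partial>lborel) = 1"
    and X_compact: "compact X"
    and f_meas: "(\<lambda>(s, th). f s th) \<in> borel_measurable
                   (restrict_space lborel X \<Otimes>\<^sub>M PiM {1..N} (\<lambda>j. theta_measure (Th j) (p j)))"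
    and f_L2: "integrable (restrict_space lborel X \<Otimes>\<^sub>M PiM {1..N} (\<lambda>j. theta_measure (Th j) (p j)))
                 (\<lambda>(s, th). (f s th)\<^sup>2)"
    and D_pos: "AE s in lborel. s \<in> X \<longrightarrow> sob_D (\<lambda>j. theta_measure (Th j) (p j)) {1..N} f s > 0"
    and U_sub: "U \<subseteq> {1..N}"
  shows "(\<integral>eta. rel_mse (\<lambda>j. theta_measure (Th j) (p j)) {1..N} U f X eta
            \<partial>PiM ({1..N} - U) (\<lambda>j. theta_measure (Th j) (p j)))
         \<le> 2 * sobol_tot (\<lambda>j. theta_measure (Th j) (p j)) {1..N} ({1..N} - U) f X"
proof -
  define M where "M j = theta_measure (Th j) (p j)" for j
  \<comment> \<open>PiM only sees the indexed components, so padding with a probability measure outside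
    {1..N} changes none of the quantities but lets the general lemmas assume all M' j are probabilities.\<close>
  define M' where "M' j = (if j \<in> {1..N} then M j else return lborel 0)" for j
  have prob: "prob_space (M' j)" for j
    using prob_space_theta_measure[OF Th_sets p_meas p_nonneg p_prob]
    by (simp add: M'_def M_def prob_space_return)
  have PiM_M': "PiM K M = PiM K M'" if "K \<subseteq> {1..N}" for K
    using that by (intro PiM_cong) (auto simp: M'_def)
  have X: "X \<in> sets lborel" using X_compact by (simp add: borel_closed compact_imp_closed)
  have "(\<integral>\<eta>. rel_mse M' {1..N} U f X \<eta> \<partial>PiM ({1..N} - U) M') \<le> 2 * sobol_tot M' {1..N} ({1..N} - U) f X"
    using U_sub f_meas f_L2
    by (intro integral_rel_mse_le_sobol_tot[OF prob _ _ X]) (simp_all add: M_def[symmetric] PiM_M')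
  moreover have "rel_mse M {1..N} U f X = rel_mse M' {1..N} U f X"
    "sobol_tot M {1..N} ({1..N} - U) f X = sobol_tot M' {1..N} ({1..N} - U) f X"
    by (simp_all add: fun_eq_iff rel_mse_def sobol_tot_def sob_Dtot_def sob_D_def sob_DV_def
        sob_condE_def sob_f0_def PiM_M')
  ultimately show ?thesis
    using PiM_M'[of "{1..N} - U"] by (simp add: M_def[abs_def])
qed

end
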